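(* Let $(Y,\rho)$ be a metric space, $\hookrightarrow_*$ a monotone embedding relation on the subsets of $Y$, $X$ a paracompact space, and $\varphi:X\rightrightarrows Y$ a $\rho$-continuous mapping such that each $\varphi(x)$, $x\in X$, is uniformly $UV^*$. Suppose $\mathscr{U}_1$ is a locally finite open cover of $X$ and $\delta_1:\mathscr{U}_1\to(0,+\infty)$. Then there exist a locally finite open cover $\mathscr{U}_2$ of $X$ refining $\mathscr{U}_1$ and functions $\delta_2,\varepsilon_2:\mathscr{U}_2\to(0,+\infty)$ with $\delta_2\le\varepsilon_2$ such that: (i) $\mathbf{O}_{\delta_2(U)}(\varphi(p))\hookrightarrow_*\mathbf{O}_{\varepsilon_2(U)}(\varphi(p))$ for every $U\in\mathscr{U}_2$ and $p\in U$; (ii) $H(\rho)(\varphi(p),\varphi(q))<\delta_2(U)/2$ for every $U\in\mathscr{U}_2$ and $p,q\in U$; (iii) $\varepsilon_2(U_2)\le\delta_1(U_1)/3$ whenever $U_1\in\mathscr{U}_1$, $U_2\in\mathscr{U}_2$ and $U_1\cap U_2\ne\emptyset$.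
   Context: A set-valued mapping $\varphi:X\rightrightarrows Y$ assigns to each $x\in X$ a nonempty subset $\varphi(x)\subset Y$. For a metric space $(Y,\rho)$, $\mathbf{O}_\varepsilon(y)$ is the open $\varepsilon$-ball about $y$ and $\mathbf{O}_\varepsilon(S)=\bigcup_{q\in S}\mathbf{O}_\varepsilon(q)$. The Hausdorff distance of nonempty $S,T\subset Y$ is $H(\rho)(S,T)=\inf\{\varepsilon>0: S\subset\mathbf{O}_\varepsilon(T),\ T\subset\mathbf{O}_\varepsilon(S)\}$. A mapping $\varphi$ is $\rho$-continuous if for every $\varepsilon>0$ each $x\in X$ has a neighbourhood $V$ with $\varphi(x)\subset\mathbf{O}_\varepsilon(\varphi(p))$ and $\varphi(p)\subset\mathbf{O}_\varepsilon(\varphi(x))$ for all $p\in V$. An embedding relation $\hookrightarrow_*$ on subsets of $Y$ is a relation with $S\hookrightarrow_*T$ implying $S\subset T$; it is monotone if $A\subset S\hookrightarrow_* T\subset B$ implies $A\hookrightarrow_* B$. A subset $S\subset Y$ is uniformly $UV^*$ if for every $\varepsilon>0$ there is $\delta>0$ with $\mathbf{O}_\delta(S)\hookrightarrow_*\mathbf{O}_\varepsilon(S)$. *)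

theory Defs
  imports "HOL-Analysis.Analysis"
begin

definition Onbhd :: "real \<Rightarrow> 'b::metric_space set \<Rightarrow> 'b set" where
  "Onbhd e S = (\<Union>q\<in>S. ball q e)"

definition Hdist :: "'b::metric_space set \<Rightarrow> 'b set \<Rightarrow> ereal" where
  "Hdist S T = Inf {ereal e | e. e > 0 \<and> S \<subseteq> Onbhd e T \<and> T \<subseteq> Onbhd e S}"

definition rho_continuous :: "'a topology \<Rightarrow> ('a \<Rightarrow> 'b::metric_space set) \<Rightarrow> bool" where
  "rho_continuous X \<phi> \<longleftrightarrow>
     (\<forall>e>0. \<forall>x\<in>topspace X. \<exists>V. openin X V \<and> x \<in> V \<and>
        (\<forall>p\<in>V. \<phi> x \<subseteq> Onbhd e (\<phi> p) \<and> \<phi> p \<subseteq> Onbhd e (\<phi> x)))"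

definition embedding_relation :: "('b set \<Rightarrow> 'b set \<Rightarrow> bool) \<Rightarrow> bool" where
  "embedding_relation R \<longleftrightarrow> (\<forall>S T. R S T \<longrightarrow> S \<subseteq> T)"

definition monotone_emb :: "('b set \<Rightarrow> 'b set \<Rightarrow> bool) \<Rightarrow> bool" where
  "monotone_emb R \<longleftrightarrow> (\<forall>A S T B. A \<subseteq> S \<and> R S T \<and> T \<subseteq> B \<longrightarrow> R A B)"

definition uniformly_UV :: "('b::metric_space set \<Rightarrow> 'b set \<Rightarrow> bool) \<Rightarrow> 'b set \<Rightarrow> bool" where
  "uniformly_UV R S \<longleftrightarrow> (\<forall>e>0. \<exists>d>0. R (Onbhd d S) (Onbhd e S))"

definition open_cover :: "'a topology \<Rightarrow> 'a set set \<Rightarrow> bool" where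
  "open_cover X \<U> \<longleftrightarrow> (\<forall>U\<in>\<U>. openin X U) \<and> \<Union>\<U> = topspace X"

definition locally_finite_in :: "'a topology \<Rightarrow> 'a set set \<Rightarrow> bool" where
  "locally_finite_in X \<U> \<longleftrightarrow>
     (\<forall>x\<in>topspace X. \<exists>V. openin X V \<and> x \<in> V \<and> finite {U\<in>\<U>. U \<inter> V \<noteq> {}})"

definition refines :: "'a set set \<Rightarrow> 'a set set \<Rightarrow> bool" where
  "refines \<V> \<U> \<longleftrightarrow> (\<forall>V\<in>\<V>. \<exists>U\<in>\<U>. V \<subseteq> U)"

definition paracompact :: "'a topology \<Rightarrow> bool" where
  "paracompact X \<longleftrightarrow>
     (\<forall>\<U>. open_cover X \<U> \<longrightarrow>
        (\<exists>\<V>. open_cover X \<V> \<and> refines \<V> \<U> \<and> locally_finite_in X \<V>))"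

end

theory Submission
  imports Defs
begin

text \<open>If \<open>\<phi> p\<close> and \<open>\<phi> x\<close> are mutually \<open>\<eta>\<close>-close, which \<open>\<rho>\<close>-continuity guarantees for \<open>p\<close>
  near \<open>x\<close>, then by monotonicity an embedding \<open>O\<^sub>d(\<phi> x) \<hookrightarrow>\<^sub>* O\<^sub>e\<^sub>/\<^sub>2(\<phi> x)\<close> coming from the
  uniform \<open>UV\<^sup>*\<close> property of \<open>\<phi> x\<close> yields \<open>O\<^sub>\<delta>(\<phi> p) \<hookrightarrow>\<^sub>* O\<^sub>e(\<phi> p)\<close> as soon as \<open>\<eta>\<close> is small
  compared with \<open>d\<close> and \<open>e\<close>, while Hausdorff distances near \<open>x\<close> are at most \<open>2\<eta>\<close>. Local
  finiteness of \<open>\<U>\<^sub>1\<close> bounds \<open>\<delta>\<^sub>1\<close> from below near \<open>x\<close>, which fixes the choice of \<open>e\<close>.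
  These conditions survive shrinking the neighbourhood, so a locally finite open refinement
  of the cover by such neighbourhoods, which exists by paracompactness, proves the theorem.\<close>

lemma Onbhd_mono: "e \<le> e' \<Longrightarrow> S \<subseteq> T \<Longrightarrow> Onbhd e S \<subseteq> Onbhd e' T"
  unfolding Onbhd_def by auto

lemma Onbhd_Onbhd_subset:
  assumes "S \<subseteq> Onbhd a T" shows "Onbhd b S \<subseteq> Onbhd (a + b) T"
proof
  fix y assume "y \<in> Onbhd b S"
  then obtain q where q: "q \<in> S" "dist q y < b" unfolding Onbhd_def by auto
  then obtain t where t: "t \<in> T" "dist t q < a" using assms unfolding Onbhd_def by auto
  have "dist t y < a + b" using dist_triangle[of t y q] q t by linarith
  then show "y \<in> Onbhd (a + b) T" using t unfolding Onbhd_def by auto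
qed

lemma Hdist_le:
  assumes "e > 0" "S \<subseteq> Onbhd e T" "T \<subseteq> Onbhd e S"
  shows "Hdist S T \<le> ereal e"
  unfolding Hdist_def by (rule Inf_lower) (use assms in blast)

lemma Hdist_le_add:
  assumes "a > 0" "b > 0"
    and "S \<subseteq> Onbhd a T" "T \<subseteq> Onbhd a S" "T \<subseteq> Onbhd b S'" "S' \<subseteq> Onbhd b T"
  shows "Hdist S S' \<le> ereal (a + b)"
proof (rule Hdist_le)
  show "S \<subseteq> Onbhd (a + b) S'"
    using assms(3) Onbhd_Onbhd_subset[OF assms(5), of a] by (simp add: add.commute)
  show "S' \<subseteq> Onbhd (a + b) S"
    using assms(6) Onbhd_Onbhd_subset[OF assms(4), of b] by blast
qed (use assms in simp)

lemma monotone_emb_Onbhd_transfer: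
  assumes "monotone_emb R" "R (Onbhd d T) (Onbhd e' T)"
    and "S \<subseteq> Onbhd \<eta> T" "T \<subseteq> Onbhd \<eta> S" "\<eta> + \<delta> \<le> d" "\<eta> + e' \<le> e"
  shows "R (Onbhd \<delta> S) (Onbhd e S)"
proof -
  have "Onbhd \<delta> S \<subseteq> Onbhd d T"
    using Onbhd_Onbhd_subset[OF assms(3)] Onbhd_mono[OF assms(5)] by blast
  moreover have "Onbhd e' T \<subseteq> Onbhd e S"
    using Onbhd_Onbhd_subset[OF assms(4)] Onbhd_mono[OF assms(6)] by blast
  ultimately show ?thesis using assms(1,2) unfolding monotone_emb_def by blast
qed

lemma locally_finite_in_local_lower_bound:
  fixes \<delta> :: "'a set \<Rightarrow> real"
  assumes "locally_finite_in X \<U>" "\<forall>U\<in>\<U>. \<delta> U > 0" "x \<in> topspace X"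
  obtains V m where "openin X V" "x \<in> V" "m > 0"
    "\<And>U. U \<in> \<U> \<Longrightarrow> U \<inter> V \<noteq> {} \<Longrightarrow> m \<le> \<delta> U"
proof -
  obtain V where V: "openin X V" "x \<in> V" "finite {U\<in>\<U>. U \<inter> V \<noteq> {}}"
    using assms(1,3) unfolding locally_finite_in_def by blast
  \<comment> \<open>The \<open>1\<close> keeps the set nonempty when no member of \<open>\<U>\<close> meets \<open>V\<close>.\<close>
  define m where "m = Min (insert 1 (\<delta> ` {U\<in>\<U>. U \<inter> V \<noteq> {}}))"
  have "m > 0" using V(3) assms(2) unfolding m_def by (subst Min_gr_iff) auto
  moreover have "m \<le> \<delta> U" if "U \<in> \<U>" "U \<inter> V \<noteq> {}" for U
    using V(3) that unfolding m_def by (intro Min_le) auto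
  ultimately show thesis using that V(1,2) by blast
qed

lemma rho_continuous_uniformly_UV_locally:
  assumes "monotone_emb R" "rho_continuous X \<phi>" "uniformly_UV R (\<phi> x)"
    and "x \<in> topspace X" "e > 0"
  obtains W d where "openin X W" "x \<in> W" "0 < d" "d \<le> e"
    "\<forall>p\<in>W. R (Onbhd d (\<phi> p)) (Onbhd e (\<phi> p))"
    "\<forall>p\<in>W. \<forall>q\<in>W. Hdist (\<phi> p) (\<phi> q) < ereal (d / 2)"
proof -
  have "e / 2 > 0" using assms(5) by simp
  then obtain d0 where d0: "d0 > 0" "R (Onbhd d0 (\<phi> x)) (Onbhd (e / 2) (\<phi> x))"
    using assms(3) unfolding uniformly_UV_def by blast
  define d where "d = min d0 e / 2"
  define \<eta> where "\<eta> = d / 8"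
  have "d > 0" "\<eta> > 0" using d0 assms(5) by (auto simp: d_def \<eta>_def)
  obtain W where W: "openin X W" "x \<in> W"
    "\<forall>p\<in>W. \<phi> x \<subseteq> Onbhd \<eta> (\<phi> p) \<and> \<phi> p \<subseteq> Onbhd \<eta> (\<phi> x)"
    using assms(2)[unfolded rho_continuous_def, rule_format, OF \<open>\<eta> > 0\<close> assms(4)] by blast
  have "\<eta> + d \<le> d0" "\<eta> + e / 2 \<le> e"
    using d0(1) assms(5) by (auto simp: \<eta>_def d_def)
  then have "R (Onbhd d (\<phi> p)) (Onbhd e (\<phi> p))" if "p \<in> W" for p
    using W(3) that by (intro monotone_emb_Onbhd_transfer[OF assms(1) d0(2), of _ \<eta>]) auto
  moreover have "Hdist (\<phi> p) (\<phi> q) < ereal (d / 2)" if "p \<in> W" "q \<in> W" for p q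
  proof -
    have "Hdist (\<phi> p) (\<phi> q) \<le> ereal (\<eta> + \<eta>)"
      using W(3) that \<open>\<eta> > 0\<close> by (intro Hdist_le_add[of \<eta> \<eta> _ "\<phi> x"]) auto
    also have "\<dots> < ereal (d / 2)" using \<open>d > 0\<close> by (simp add: \<eta>_def)
    finally show ?thesis .
  qed
  moreover have "d \<le> e" using assms(5) by (simp add: d_def)
  ultimately show thesis using that W(1,2) \<open>d > 0\<close> by blast
qed

lemma paracompact_locally_finite_cover_with_data:
  assumes "paracompact X"
    and local: "\<And>x. x \<in> topspace X \<Longrightarrow> \<exists>W c. openin X W \<and> x \<in> W \<and> Q W c"
    and shrink: "\<And>W V c. Q W c \<Longrightarrow> V \<subseteq> W \<Longrightarrow> Q V c"
  obtains \<V> f where "open_cover X \<V>" "locally_finite_in X \<V>" "\<forall>V\<in>\<V>. Q V (f V)"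
proof -
  obtain W c where Wc: "\<And>x. x \<in> topspace X \<Longrightarrow> openin X (W x) \<and> x \<in> W x \<and> Q (W x) (c x)"
    using local by metis
  have "open_cover X (W ` topspace X)"
    unfolding open_cover_def using Wc openin_subset by fastforce
  then obtain \<V> where \<V>: "open_cover X \<V>" "refines \<V> (W ` topspace X)" "locally_finite_in X \<V>"
    using assms(1) unfolding paracompact_def by blast
  have "\<exists>x. Q V (c x)" if "V \<in> \<V>" for V
    using \<V>(2) that Wc shrink unfolding refines_def by blast
  then obtain g where "\<forall>V\<in>\<V>. Q V (c (g V))" by metis
  with \<V>(1,3) show thesis by (rule that)
qed

definition admissible_nbhd ::
    "('b set \<Rightarrow> 'b set \<Rightarrow> bool) \<Rightarrow> ('a \<Rightarrow> 'b::metric_space set) \<Rightarrow> 'a set set \<Rightarrow> ('a set \<Rightarrow> real) \<Rightarrow>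
      'a set \<Rightarrow> real \<Rightarrow> real \<Rightarrow> bool" where
  "admissible_nbhd R \<phi> \<U> \<delta> W d e \<longleftrightarrow> (\<exists>U\<in>\<U>. W \<subseteq> U) \<and> 0 < d \<and> d \<le> e \<and>
     (\<forall>p\<in>W. R (Onbhd d (\<phi> p)) (Onbhd e (\<phi> p))) \<and>
     (\<forall>p\<in>W. \<forall>q\<in>W. Hdist (\<phi> p) (\<phi> q) < ereal (d / 2)) \<and>
     (\<forall>U\<in>\<U>. U \<inter> W \<noteq> {} \<longrightarrow> e \<le> \<delta> U / 3)"

lemma admissible_nbhd_subset:
  "admissible_nbhd R \<phi> \<U> \<delta> W d e \<Longrightarrow> V \<subseteq> W \<Longrightarrow> admissible_nbhd R \<phi> \<U> \<delta> V d e"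
  unfolding admissible_nbhd_def by (auto simp: subset_iff) blast

lemma admissible_nbhd_exists:
  assumes "monotone_emb R" "rho_continuous X \<phi>" "uniformly_UV R (\<phi> x)"
    and "open_cover X \<U>" "locally_finite_in X \<U>" "\<forall>U\<in>\<U>. \<delta> U > 0" "x \<in> topspace X"
  obtains W d e where "openin X W" "x \<in> W" "admissible_nbhd R \<phi> \<U> \<delta> W d e"
proof -
  obtain U0 where U0: "U0 \<in> \<U>" "openin X U0" "x \<in> U0"
    using assms(4,7) unfolding open_cover_def by blast
  obtain V m where V: "openin X V" "x \<in> V" "m > 0"
    "\<And>U. U \<in> \<U> \<Longrightarrow> U \<inter> V \<noteq> {} \<Longrightarrow> m \<le> \<delta> U"
    using locally_finite_in_local_lower_bound[OF assms(5-7)] by blast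
  have "m / 3 > 0" using \<open>m > 0\<close> by simp
  then obtain W d where W: "openin X W" "x \<in> W" "0 < d" "d \<le> m / 3"
    "\<forall>p\<in>W. R (Onbhd d (\<phi> p)) (Onbhd (m / 3) (\<phi> p))"
    "\<forall>p\<in>W. \<forall>q\<in>W. Hdist (\<phi> p) (\<phi> q) < ereal (d / 2)"
    using rho_continuous_uniformly_UV_locally[OF assms(1-3,7)] by blast
  have "m / 3 \<le> \<delta> U / 3" if "U \<in> \<U>" "U \<inter> (W \<inter> V \<inter> U0) \<noteq> {}" for U
    using V(4)[OF that(1)] that(2) by auto
  then have "admissible_nbhd R \<phi> \<U> \<delta> (W \<inter> V \<inter> U0) d (m / 3)"
    unfolding admissible_nbhd_def using U0(1) W(3-6) by blast
  moreover have "openin X (W \<inter> V \<inter> U0)" using W(1) V(1) U0(2) by (intro openin_Int)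
  ultimately show thesis using that W(2) V(2) U0(3) by blast
qed

theorem proposition2p4:
  fixes X :: "'a topology"
    and \<phi> :: "'a \<Rightarrow> 'b::metric_space set"
    and R :: "'b set \<Rightarrow> 'b set \<Rightarrow> bool"
    and \<U>1 :: "'a set set"
    and \<delta>1 :: "'a set \<Rightarrow> real"
  assumes "embedding_relation R" and "monotone_emb R"
    and "paracompact X"
    and "\<forall>x\<in>topspace X. \<phi> x \<noteq> {}"
    and "rho_continuous X \<phi>"
    and "\<forall>x\<in>topspace X. uniformly_UV R (\<phi> x)"
    and "open_cover X \<U>1" and "locally_finite_in X \<U>1"
    and "\<forall>U\<in>\<U>1. \<delta>1 U > 0"
  shows "\<exists>\<U>2 \<delta>2 \<epsilon>2. open_cover X \<U>2 \<and> locally_finite_in X \<U>2 \<and> refines \<U>2 \<U>1 \<and>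
     (\<forall>U\<in>\<U>2. 0 < \<delta>2 U \<and> 0 < \<epsilon>2 U \<and> \<delta>2 U \<le> \<epsilon>2 U) \<and>
     (\<forall>U\<in>\<U>2. \<forall>p\<in>U. R (Onbhd (\<delta>2 U) (\<phi> p)) (Onbhd (\<epsilon>2 U) (\<phi> p))) \<and>
     (\<forall>U\<in>\<U>2. \<forall>p\<in>U. \<forall>q\<in>U. Hdist (\<phi> p) (\<phi> q) < ereal (\<delta>2 U / 2)) \<and>
     (\<forall>U1\<in>\<U>1. \<forall>U2\<in>\<U>2. U1 \<inter> U2 \<noteq> {} \<longrightarrow> \<epsilon>2 U2 \<le> \<delta>1 U1 / 3)"
\<comment> \<open>Neither that \<open>R\<close> is an embedding relation nor that \<open>\<phi>\<close> has nonempty values is needed.\<close>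
proof -
  let ?Q = "\<lambda>W de. admissible_nbhd R \<phi> \<U>1 \<delta>1 W (fst de) (snd de)"
  have local: "\<exists>W de. openin X W \<and> x \<in> W \<and> ?Q W de" if x: "x \<in> topspace X" for x
  proof -
    obtain W d e where "openin X W" "x \<in> W" "admissible_nbhd R \<phi> \<U>1 \<delta>1 W d e"
      using admissible_nbhd_exists[OF assms(2,5) assms(6)[rule_format, OF x] assms(7-9) x] .
    then show ?thesis by (intro exI[of _ W] exI[of _ "(d, e)"]) simp
  qed
  obtain \<U>2 f where "open_cover X \<U>2" "locally_finite_in X \<U>2" and Q: "\<forall>V\<in>\<U>2. ?Q V (f V)"
    using paracompact_locally_finite_cover_with_data[where Q = ?Q, OF assms(3) local]
      admissible_nbhd_subset by blast
  have "refines \<U>2 \<U>1" using Q unfolding admissible_nbhd_def refines_def by blast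
  with \<open>open_cover X \<U>2\<close> \<open>locally_finite_in X \<U>2\<close> show ?thesis
    by (intro exI[of _ \<U>2] exI[of _ "\<lambda>U. fst (f U)"] exI[of _ "\<lambda>U. snd (f U)"] conjI ballI impI)
       (use Q in \<open>auto simp: admissible_nbhd_def\<close>)
qed

end
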